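(* Let $m\ge 38$ and let $G$ be a graph with maximum spectral radius among all $H(4,3)$-free graphs with $m$ edges and no isolated vertices. Then $G$ is connected.
   Context: All graphs are simple and undirected; the spectral radius $\rho(G)$ is the largest adjacency eigenvalue. $H(4,3)$ is the graph formed by a cycle of length $4$ and a triangle sharing exactly one common vertex. *)

theory Defs
  imports Complex_Main
begin

definition simple_graph :: "nat set \<Rightarrow> nat set set \<Rightarrow> bool" where
  "simple_graph V E \<longleftrightarrow> finite V \<and> (\<forall>e\<in>E. e \<subseteq> V \<and> card e = 2)"

definition no_isolated :: "nat set \<Rightarrow> nat set set \<Rightarrow> bool" where
  "no_isolated V E \<longleftrightarrow> (\<forall>v\<in>V. \<exists>e\<in>E. v \<in> e)"

definition contains_H43 :: "nat set \<Rightarrow> nat set set \<Rightarrow> bool" where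
  "contains_H43 V E \<longleftrightarrow> (\<exists>a b c d x y.
     a \<in> V \<and> b \<in> V \<and> c \<in> V \<and> d \<in> V \<and> x \<in> V \<and> y \<in> V \<and>
     distinct [a, b, c, d, x, y] \<and>
     {a, b} \<in> E \<and> {b, c} \<in> E \<and> {c, d} \<in> E \<and> {d, a} \<in> E \<and>
     {a, x} \<in> E \<and> {x, y} \<in> E \<and> {y, a} \<in> E)"

definition H43_free :: "nat set \<Rightarrow> nat set set \<Rightarrow> bool" where
  "H43_free V E \<longleftrightarrow> \<not> contains_H43 V E"

text \<open>lambda is an eigenvalue of the adjacency matrix A (indexed by V):
A x = lambda x for some nonzero real vector x on V. (A is real symmetric,
so all its eigenvalues are real with real eigenvectors.)\<close>
definition adj_eigenvalue :: "nat set \<Rightarrow> nat set set \<Rightarrow> real \<Rightarrow> bool" where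
  "adj_eigenvalue V E lam \<longleftrightarrow> (\<exists>x :: nat \<Rightarrow> real. (\<exists>v\<in>V. x v \<noteq> 0) \<and>
     (\<forall>v\<in>V. (\<Sum>u\<in>{u\<in>V. {u, v} \<in> E}. x u) = lam * x v))"

definition spectral_radius :: "nat set \<Rightarrow> nat set set \<Rightarrow> real" where
  "spectral_radius V E = Max {lam. adj_eigenvalue V E lam}"

definition connected_graph :: "nat set \<Rightarrow> nat set set \<Rightarrow> bool" where
  "connected_graph V E \<longleftrightarrow>
     (\<forall>u\<in>V. \<forall>v\<in>V. (u, v) \<in> {(p, q). {p, q} \<in> E}\<^sup>*)"

definition H43_free_class :: "nat \<Rightarrow> nat set \<Rightarrow> nat set set \<Rightarrow> bool" where
  "H43_free_class m V E \<longleftrightarrow> simple_graph V E \<and> card E = m \<and> no_isolated V E \<and> H43_free V E"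

end

theory Submission
  imports Defs "HOL-Analysis.Analysis" Jordan_Normal_Form.Char_Poly
begin

text \<open>Suppose the extremal graph G were disconnected, and let x be an eigenvector for
\<open>\<rho>(G)\<close>, the maximum of the Rayleigh quotient, with x w \<noteq> 0. Keep the component C of w,
delete all other edges, and hang the same number k of pendant edges at w on new vertices.
Every vertex of H(4,3) has two neighbours in it, a pendant vertex only one, so the new graph
G' is again H(4,3)-free, with m edges and no isolated vertices. The test vector y equal to
\<bar>x\<bar> on C and to \<open>\<epsilon>\<close> on the new vertices has Rayleigh numerator at least
\<open>\<rho>(G) \<parallel>x\<^sub>C\<parallel>\<^sup>2 + 2k\<epsilon>\<bar>x w\<bar>\<close> and squared norm \<open>\<parallel>x\<^sub>C\<parallel>\<^sup>2 + k\<epsilon>\<^sup>2\<close>, so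
\<open>\<rho>(G') > \<rho>(G)\<close> for small \<open>\<epsilon> > 0\<close>, contradicting maximality.\<close>

section \<open>Rayleigh quotients\<close>

definition quad_form :: "'a set \<Rightarrow> ('a \<Rightarrow> 'a \<Rightarrow> real) \<Rightarrow> ('a \<Rightarrow> real) \<Rightarrow> real" where
  "quad_form V a x = (\<Sum>v\<in>V. \<Sum>u\<in>V. a u v * x u * x v)"

definition bilin_form ::
    "'a set \<Rightarrow> ('a \<Rightarrow> 'a \<Rightarrow> real) \<Rightarrow> ('a \<Rightarrow> real) \<Rightarrow> ('a \<Rightarrow> real) \<Rightarrow> real" where
  "bilin_form V a x z = (\<Sum>v\<in>V. \<Sum>u\<in>V. a u v * x u * z v)"

definition sq_norm :: "'a set \<Rightarrow> ('a \<Rightarrow> real) \<Rightarrow> real" where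
  "sq_norm V x = (\<Sum>v\<in>V. (x v)\<^sup>2)"

definition eigenpair :: "'a set \<Rightarrow> ('a \<Rightarrow> 'a \<Rightarrow> real) \<Rightarrow> real \<Rightarrow> ('a \<Rightarrow> real) \<Rightarrow> bool" where
  "eigenpair V a lam x \<longleftrightarrow> (\<exists>v\<in>V. x v \<noteq> 0) \<and> (\<forall>v\<in>V. (\<Sum>u\<in>V. a u v * x u) = lam * x v)"

lemma sq_norm_nonneg: "0 \<le> sq_norm V x"
  by (simp add: sq_norm_def sum_nonneg)

lemma sq_norm_eq_0_iff: "finite V \<Longrightarrow> sq_norm V x = 0 \<longleftrightarrow> (\<forall>v\<in>V. x v = 0)"
  by (simp add: sq_norm_def sum_nonneg_eq_0_iff)

lemma sq_norm_pos: "finite V \<Longrightarrow> v \<in> V \<Longrightarrow> x v \<noteq> 0 \<Longrightarrow> 0 < sq_norm V x"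
  using sq_norm_eq_0_iff sq_norm_nonneg by (metis order_le_less)

lemma sq_norm_abs [simp]: "sq_norm V (\<lambda>v. \<bar>x v\<bar>) = sq_norm V x"
  by (simp add: sq_norm_def)

lemma quad_form_scale: "quad_form V a (\<lambda>v. c * x v) = c\<^sup>2 * quad_form V a x"
  by (simp add: quad_form_def sum_distrib_left algebra_simps power2_eq_square)

lemma sq_norm_scale: "sq_norm V (\<lambda>v. c * x v) = c\<^sup>2 * sq_norm V x"
  by (simp add: sq_norm_def sum_distrib_left algebra_simps power2_eq_square)

lemma bilin_form_commute:
  assumes "\<forall>u\<in>V. \<forall>v\<in>V. a u v = a v u"
  shows "bilin_form V a z x = bilin_form V a x z"
proof -
  have "bilin_form V a z x = (\<Sum>u\<in>V. \<Sum>v\<in>V. a u v * z u * x v)"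
    unfolding bilin_form_def by (rule sum.swap)
  also have "\<dots> = bilin_form V a x z"
    unfolding bilin_form_def using assms by (intro sum.cong refl) (auto simp: mult_ac)
  finally show ?thesis .
qed

lemma quad_form_add_scaled:
  assumes "\<forall>u\<in>V. \<forall>v\<in>V. a u v = a v u"
  shows "quad_form V a (\<lambda>v. x v + t * z v)
           = quad_form V a x + 2 * t * bilin_form V a x z + t\<^sup>2 * quad_form V a z"
proof -
  have "quad_form V a (\<lambda>v. x v + t * z v)
          = quad_form V a x + t * (bilin_form V a x z + bilin_form V a z x) + t\<^sup>2 * quad_form V a z"
    by (simp add: quad_form_def bilin_form_def sum_distrib_left sum.distrib[symmetric]
        algebra_simps power2_eq_square)
  thus ?thesis using bilin_form_commute[OF assms] by simp
qed

lemma sq_norm_add_scaled: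
  "sq_norm V (\<lambda>v. x v + t * z v) = sq_norm V x + 2 * t * (\<Sum>v\<in>V. x v * z v) + t\<^sup>2 * sq_norm V z"
  by (simp add: sq_norm_def sum_distrib_left sum.distrib[symmetric] algebra_simps power2_eq_square)

lemma quad_form_nonneg_weights_abs:
  assumes "\<And>u v. 0 \<le> a u v"
  shows "quad_form V a x \<le> quad_form V a (\<lambda>v. \<bar>x v\<bar>)"
  unfolding quad_form_def
proof (intro sum_mono)
  fix u v
  have "x u * x v \<le> \<bar>x u\<bar> * \<bar>x v\<bar>" by (metis abs_ge_self abs_mult)
  from mult_left_mono[OF this assms]
  show "a u v * x u * x v \<le> a u v * \<bar>x u\<bar> * \<bar>x v\<bar>" by (simp add: mult_ac)
qed

lemma quad_form_add: "quad_form V (\<lambda>u v. a u v + b u v) y = quad_form V a y + quad_form V b y"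
  by (simp add: quad_form_def sum.distrib[symmetric] algebra_simps)

lemma quad_form_transpose: "quad_form V (\<lambda>u v. a v u) y = quad_form V a y"
proof -
  have "quad_form V (\<lambda>u v. a v u) y = (\<Sum>u\<in>V. \<Sum>v\<in>V. a v u * y u * y v)"
    unfolding quad_form_def by (rule sum.swap)
  also have "\<dots> = quad_form V a y" unfolding quad_form_def by (simp add: mult_ac)
  finally show ?thesis .
qed

lemma quad_form_supported:
  assumes "finite V'" "V \<subseteq> V'" "\<And>u v. a u v \<noteq> 0 \<Longrightarrow> u \<in> V \<and> v \<in> V"
  shows "quad_form V' a y = quad_form V a y"
proof -
  have zero: "a u v * y u * y v = 0" if "u \<notin> V \<or> v \<notin> V" for u v
    using assms(3) that by fastforce
  have "quad_form V' a y = (\<Sum>v\<in>V'. \<Sum>u\<in>V. a u v * y u * y v)"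
    unfolding quad_form_def
    by (intro sum.cong refl sum.mono_neutral_right[OF assms(1,2)]) (auto simp: zero)
  also have "\<dots> = quad_form V a y"
    unfolding quad_form_def by (intro sum.mono_neutral_right[OF assms(1,2)]) (auto simp: zero)
  finally show ?thesis .
qed

lemma quad_form_star:
  assumes fin: "finite V" and "w \<in> V" "P \<subseteq> V" "w \<notin> P" and yP: "\<forall>p\<in>P. y p = c"
  shows "quad_form V (\<lambda>u v. if u = w \<and> v \<in> P then 1 else 0) y = real (card P) * y w * c"
proof -
  have "quad_form V (\<lambda>u v. if u = w \<and> v \<in> P then 1 else 0) y
          = (\<Sum>v\<in>V. if v \<in> P then y w * c else 0)"
    unfolding quad_form_def
  proof (rule sum.cong[OF refl])
    fix v assume "v \<in> V"
    have "(\<Sum>u\<in>V. (if u = w \<and> v \<in> P then 1 else 0) * y u * y v)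
            = (\<Sum>u\<in>V. if u = w then (if v \<in> P then y w * y v else 0) else 0)"
      by (intro sum.cong) auto
    also have "\<dots> = (if v \<in> P then y w * c else 0)"
      using fin \<open>w \<in> V\<close> yP by simp
    finally show "(\<Sum>u\<in>V. (if u = w \<and> v \<in> P then 1 else 0) * y u * y v)
                    = (if v \<in> P then y w * c else 0)" .
  qed
  also have "\<dots> = real (card P) * y w * c"
    using fin assms(3) by (simp add: sum.If_cases Int_absorb1)
  finally show ?thesis .
qed

lemma quad_form_attains_max_on_sphere:
  assumes "finite V" "V \<noteq> {}"
  shows "\<exists>x. sq_norm V x = 1 \<and> (\<forall>y. sq_norm V y = 1 \<longrightarrow> quad_form V a y \<le> quad_form V a x)"
proof -
  let ?X = "product_topology (\<lambda>_. euclideanreal) V"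
  let ?K = "{x \<in> topspace ?X. sq_norm V x \<in> {1}} \<inter> PiE V (\<lambda>_. {-1..1})"
  have "continuous_map ?X euclideanreal (sq_norm V)"
    unfolding sq_norm_def by (intro continuous_intros assms continuous_map_product_projection)
  hence "closedin ?X {x \<in> topspace ?X. sq_norm V x \<in> {1}}"
    by (rule closedin_continuous_map_preimage) simp
  hence "compactin ?X ?K"
    by (intro closed_Int_compactin) (simp_all add: compactin_PiE)
  moreover have "continuous_map ?X euclideanreal (quad_form V a)"
    unfolding quad_form_def
    by (intro continuous_intros assms continuous_map_product_projection)
  ultimately have comp: "compact (quad_form V a ` ?K)"
    using image_compactin by fastforce
  have sphere_in_K: "restrict y V \<in> ?K" if y: "sq_norm V y = 1" for y
  proof -
    have "(y v)\<^sup>2 \<le> 1" if "v \<in> V" for v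
      using y member_le_sum[of v V "\<lambda>u. (y u)\<^sup>2"] that assms(1) by (simp add: sq_norm_def)
    thus ?thesis
      using y by (auto simp: sq_norm_def PiE_def abs_square_le_1 abs_le_iff)
  qed
  obtain v0 where "v0 \<in> V" using assms by auto
  hence "sq_norm V (\<lambda>v. if v = v0 then 1 else 0) = 1"
    using assms(1) by (simp add: sq_norm_def if_distrib[of "\<lambda>c. c\<^sup>2"] cong: if_cong)
  hence "quad_form V a ` ?K \<noteq> {}" using sphere_in_K by blast
  then obtain z where zK: "z \<in> ?K" and zmax: "\<forall>w\<in>?K. quad_form V a w \<le> quad_form V a z"
    using compact_attains_sup[OF comp] by blast
  have "quad_form V a y \<le> quad_form V a z" if "sq_norm V y = 1" for y
  proof -
    have "quad_form V a y = quad_form V a (restrict y V)" by (simp add: quad_form_def)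
    also have "\<dots> \<le> quad_form V a z" using zmax sphere_in_K[OF that] by blast
    finally show ?thesis .
  qed
  thus ?thesis using zK by auto
qed

lemma quad_form_le_max_sq_norm:
  assumes "finite V" "V \<noteq> {}"
  shows "\<exists>x. sq_norm V x = 1 \<and> (\<forall>y. quad_form V a y \<le> quad_form V a x * sq_norm V y)"
proof -
  obtain x where x1: "sq_norm V x = 1"
    and xmax: "\<forall>y. sq_norm V y = 1 \<longrightarrow> quad_form V a y \<le> quad_form V a x"
    using quad_form_attains_max_on_sphere[OF assms] by blast
  have "quad_form V a y \<le> quad_form V a x * sq_norm V y" for y
  proof (cases "sq_norm V y = 0")
    case True
    hence "quad_form V a y = 0" using assms(1) by (simp add: sq_norm_eq_0_iff quad_form_def)
    thus ?thesis using True by simp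
  next
    case False
    hence pos: "0 < sq_norm V y" using sq_norm_nonneg[of V y] by linarith
    define s where "s = 1 / sqrt (sq_norm V y)"
    have s2: "s\<^sup>2 = 1 / sq_norm V y" using pos by (simp add: s_def power_divide)
    have "sq_norm V (\<lambda>v. s * y v) = 1" using pos by (simp add: sq_norm_scale s2)
    hence "quad_form V a (\<lambda>v. s * y v) \<le> quad_form V a x" using xmax by blast
    thus ?thesis using pos by (simp add: quad_form_scale s2 divide_le_eq)
  qed
  thus ?thesis using x1 by blast
qed

lemma nonneg_quadratic_linear_coeff_0:
  fixes c d :: real
  assumes "\<forall>t. 0 \<le> c * t + d * t\<^sup>2"
  shows "c = 0"
proof (rule ccontr)
  assume c: "c \<noteq> 0"
  define D where "D = \<bar>d\<bar> + 1"
  have pos: "D > 0" by (simp add: D_def)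
  have "c * (- c / D) + d * (- c / D)\<^sup>2 = c\<^sup>2 / D\<^sup>2 * (d - D)"
    using pos by (simp add: field_simps power2_eq_square)
  also have "\<dots> < 0"
    using c pos by (intro mult_pos_neg) (simp_all add: D_def)
  finally show False using assms by (metis not_le)
qed

text \<open>The maximiser of the Rayleigh quotient is an eigenvector: the first variation of
\<open>quad_form - \<mu> * sq_norm\<close> at it must vanish in every direction.\<close>

lemma rayleigh_max_eigenpair:
  assumes fin: "finite V" and ne: "V \<noteq> {}" and sym: "\<forall>u\<in>V. \<forall>v\<in>V. a u v = a v u"
  shows "\<exists>mu x. eigenpair V a mu x \<and> (\<forall>y. quad_form V a y \<le> mu * sq_norm V y)"
proof -
  obtain x where x1: "sq_norm V x = 1"
    and le: "\<And>y. quad_form V a y \<le> quad_form V a x * sq_norm V y"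
    using quad_form_le_max_sq_norm[OF fin ne] by blast
  define mu where "mu = quad_form V a x"
  have first_variation: "bilin_form V a x z = mu * (\<Sum>v\<in>V. x v * z v)" for z
  proof -
    have "0 \<le> 2 * (mu * (\<Sum>v\<in>V. x v * z v) - bilin_form V a x z) * t
              + (mu * sq_norm V z - quad_form V a z) * t\<^sup>2" for t
      using le[of "\<lambda>v. x v + t * z v"]
      unfolding quad_form_add_scaled[OF sym] sq_norm_add_scaled x1
      by (simp add: mu_def algebra_simps)
    from nonneg_quadratic_linear_coeff_0[OF allI[OF this]] show ?thesis by simp
  qed
  have "eigenpair V a mu x"
    unfolding eigenpair_def
  proof (intro conjI ballI)
    show "\<exists>v\<in>V. x v \<noteq> 0" using x1 sq_norm_eq_0_iff[OF fin, of x] by auto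
    fix w assume w: "w \<in> V"
    have "bilin_form V a x (\<lambda>v. if v = w then 1 else 0)
            = (\<Sum>v\<in>V. if v = w then (\<Sum>u\<in>V. a u w * x u) else 0)"
      unfolding bilin_form_def by (intro sum.cong refl) auto
    also have "\<dots> = (\<Sum>u\<in>V. a u w * x u)" using w fin by simp
    finally have "bilin_form V a x (\<lambda>v. if v = w then 1 else 0) = (\<Sum>u\<in>V. a u w * x u)" .
    moreover have "(\<Sum>v\<in>V. x v * (if v = w then 1 else 0)) = x w"
      using w fin by (simp add: if_distrib[of "\<lambda>c. _ * c"] sum.delta cong: if_cong)
    ultimately show "(\<Sum>u\<in>V. a u w * x u) = mu * x w" using first_variation by metis
  qed
  thus ?thesis using le unfolding mu_def by blast
qed

lemma eigenpair_quad_form_on_closed: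
  assumes eig: "eigenpair V a lam x" and fin: "finite V" and SV: "S \<subseteq> V"
    and closed: "\<forall>u\<in>V - S. \<forall>v\<in>S. a u v = 0"
  shows "quad_form S a x = lam * sq_norm S x"
proof -
  have "(\<Sum>u\<in>S. a u v * x u) = lam * x v" if "v \<in> S" for v
  proof -
    have "(\<Sum>u\<in>S. a u v * x u) = (\<Sum>u\<in>V. a u v * x u)"
      using fin SV closed that by (intro sum.mono_neutral_left) auto
    thus ?thesis using eig SV that unfolding eigenpair_def by auto
  qed
  hence "quad_form S a x = (\<Sum>v\<in>S. x v * (lam * x v))"
    unfolding quad_form_def by (simp add: sum_distrib_left[symmetric] mult.commute)
  also have "\<dots> = lam * sq_norm S x"
    by (simp add: sq_norm_def sum_distrib_left power2_eq_square algebra_simps)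
  finally show ?thesis .
qed

lemma finite_eigenvalues:
  assumes fin: "finite V"
  shows "finite {lam. \<exists>x. eigenpair V a lam x}"
proof -
  define n where "n = card V"
  obtain f where bij: "bij_betw f {0..<n} V"
    using ex_bij_betw_nat_finite[OF fin] unfolding n_def by blast
  define A :: "real mat" where "A = mat n n (\<lambda>(i, j). a (f j) (f i))"
  have A: "A \<in> carrier_mat n n" by (simp add: A_def)
  have "eigenvalue A lam" if eig: "eigenpair V a lam x" for lam x
  proof -
    define v where "v = vec n (\<lambda>i. x (f i))"
    obtain w where w: "w \<in> V" "x w \<noteq> 0" using eig unfolding eigenpair_def by blast
    then obtain i where i: "i < n" "f i = w" using bij
      by (metis atLeastLessThan_iff bij_betw_iff_bijections)
    have "eigenvector A v lam"
      unfolding eigenvector_def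
    proof (intro conjI)
      show "v \<in> carrier_vec (dim_row A)" using A by (simp add: v_def)
      have "v $ i \<noteq> 0" using i w by (simp add: v_def)
      thus "v \<noteq> 0\<^sub>v (dim_row A)" using i A by auto
      show "A *\<^sub>v v = lam \<cdot>\<^sub>v v"
      proof (rule eq_vecI)
        show "dim_vec (A *\<^sub>v v) = dim_vec (lam \<cdot>\<^sub>v v)" using A by (simp add: v_def)
        fix j assume "j < dim_vec (lam \<cdot>\<^sub>v v)"
        hence j: "j < n" by (simp add: v_def)
        hence "f j \<in> V" using bij bij_betwE by fastforce
        have "(A *\<^sub>v v) $ j = (\<Sum>k\<in>{0..<n}. a (f k) (f j) * x (f k))"
          using j A by (simp add: A_def v_def scalar_prod_def)
        also have "\<dots> = (\<Sum>u\<in>V. a u (f j) * x u)"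
          using sum.reindex_bij_betw[OF bij, of "\<lambda>u. a u (f j) * x u"] by simp
        also have "\<dots> = lam * x (f j)" using eig \<open>f j \<in> V\<close> unfolding eigenpair_def by blast
        also have "\<dots> = (lam \<cdot>\<^sub>v v) $ j" using j by (simp add: v_def)
        finally show "(A *\<^sub>v v) $ j = (lam \<cdot>\<^sub>v v) $ j" .
      qed
    qed
    thus ?thesis unfolding eigenvalue_def by blast
  qed
  hence "{lam. \<exists>x. eigenpair V a lam x} \<subseteq> {lam. poly (char_poly A) lam = 0}"
    using eigenvalue_root_char_poly[OF A] by blast
  moreover have "char_poly A \<noteq> 0"
    using degree_monic_char_poly[OF A] by auto
  ultimately show ?thesis using poly_roots_finite finite_subset by blast
qed

definition adj :: "'a set set \<Rightarrow> 'a \<Rightarrow> 'a \<Rightarrow> real" where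
  "adj E u v = (if {u, v} \<in> E then 1 else 0)"

lemma adj_commute: "adj E u v = adj E v u"
  by (simp add: adj_def insert_commute)

lemma adj_nonneg: "0 \<le> adj E u v"
  by (simp add: adj_def)

lemma adj_eigenvalue_iff_eigenpair:
  "finite V \<Longrightarrow> adj_eigenvalue V E lam \<longleftrightarrow> (\<exists>x. eigenpair V (adj E) lam x)"
  unfolding adj_eigenvalue_def eigenpair_def adj_def
  by (simp add: if_distrib[of "\<lambda>c. c * _"] sum.inter_filter cong: if_cong)

lemma spectral_radius_eq_rayleigh_max:
  assumes fin: "finite V" and eig: "eigenpair V (adj E) mu x"
    and le: "\<forall>y. quad_form V (adj E) y \<le> mu * sq_norm V y"
  shows "spectral_radius V E = mu"
  unfolding spectral_radius_def
proof (rule Max_eqI)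
  let ?S = "{lam. adj_eigenvalue V E lam}"
  have S: "?S = {lam. \<exists>x. eigenpair V (adj E) lam x}"
    using adj_eigenvalue_iff_eigenpair[OF fin] by simp
  show "finite ?S" unfolding S by (rule finite_eigenvalues[OF fin])
  show "mu \<in> ?S" unfolding S using eig by blast
  fix lam assume "lam \<in> ?S"
  then obtain z where z: "eigenpair V (adj E) lam z" unfolding S by blast
  then obtain v where "v \<in> V" "z v \<noteq> 0" unfolding eigenpair_def by blast
  hence "0 < sq_norm V z" using sq_norm_pos[OF fin] by blast
  moreover have "quad_form V (adj E) z = lam * sq_norm V z"
    by (rule eigenpair_quad_form_on_closed[OF z fin order_refl]) simp
  ultimately show "lam \<le> mu" using le[rule_format, of z] by simp
qed

lemma spectral_radius_rayleigh:
  assumes "finite V" "V \<noteq> {}"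
  shows "(\<exists>x. eigenpair V (adj E) (spectral_radius V E) x)
           \<and> (\<forall>y. quad_form V (adj E) y \<le> spectral_radius V E * sq_norm V y)"
proof -
  have "\<forall>u\<in>V. \<forall>v\<in>V. adj E u v = adj E v u" by (intro ballI) (rule adj_commute)
  then obtain mu x where "eigenpair V (adj E) mu x" "\<forall>y. quad_form V (adj E) y \<le> mu * sq_norm V y"
    using rayleigh_max_eigenpair[OF assms] by blast
  moreover from this have "spectral_radius V E = mu"
    by (rule spectral_radius_eq_rayleigh_max[OF assms(1)])
  ultimately show ?thesis by blast
qed

section \<open>Connected components\<close>

definition component :: "'a set set \<Rightarrow> 'a \<Rightarrow> 'a set" where
  "component E w = {v. (w, v) \<in> {(p, q). {p, q} \<in> E}\<^sup>*}"

definition induced_edges :: "'a set set \<Rightarrow> 'a set \<Rightarrow> 'a set set" where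
  "induced_edges E C = {e \<in> E. e \<subseteq> C}"

lemma sym_edge_rel: "sym {(p, q). {p, q} \<in> E}"
  by (rule symI) (simp add: insert_commute)

lemma self_in_component: "w \<in> component E w"
  by (simp add: component_def)

lemma component_edge_closed: "{u, v} \<in> E \<Longrightarrow> u \<in> component E w \<Longrightarrow> v \<in> component E w"
  unfolding component_def by (auto intro: rtrancl_into_rtrancl)

lemma edge_subset_component:
  assumes "e \<in> E" "card e = 2" "u \<in> e" "u \<in> component E w"
  shows "e \<subseteq> component E w"
proof -
  obtain a b where e: "e = {a, b}" using card_2_iff[THEN iffD1, OF assms(2)] by blast
  have "a \<in> component E w \<and> b \<in> component E w"
  proof (cases "u = a")
    case True
    thus ?thesis using assms(1,4) e component_edge_closed[of a b E w] by simp
  next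
    case False
    hence "u = b" using assms(3) e by blast
    moreover have "{b, a} \<in> E" using assms(1) e by (simp add: insert_commute)
    ultimately show ?thesis using assms(4) component_edge_closed[of b a E w] by simp
  qed
  thus ?thesis using e by blast
qed

lemma component_subset:
  assumes "\<forall>e\<in>E. e \<subseteq> V" "w \<in> V"
  shows "component E w \<subseteq> V"
proof
  fix v assume "v \<in> component E w"
  hence "(w, v) \<in> {(p, q). {p, q} \<in> E}\<^sup>*" by (simp add: component_def)
  thus "v \<in> V" by (induction rule: rtrancl_induct) (use assms in auto)
qed

lemma adj_leaving_component:
  assumes "u \<notin> component E w" "v \<in> component E w"
  shows "adj E u v = 0"
proof -
  have "{v, u} \<notin> E" using assms component_edge_closed[of v u E w] by blast
  thus ?thesis by (simp add: adj_def insert_commute)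
qed

lemma adj_induced_edges: "u \<in> C \<Longrightarrow> v \<in> C \<Longrightarrow> adj (induced_edges E C) u v = adj E u v"
  by (simp add: adj_def induced_edges_def)

lemma not_connected_not_subset_component:
  assumes "\<not> connected_graph V E"
  shows "\<not> V \<subseteq> component E w"
proof
  let ?R = "{(p, q). {p, q} \<in> E}"
  assume sub: "V \<subseteq> component E w"
  have "(u, v) \<in> ?R\<^sup>*" if "u \<in> V" "v \<in> V" for u v
  proof -
    have "(w, u) \<in> ?R\<^sup>*" "(w, v) \<in> ?R\<^sup>*" using sub that by (auto simp: component_def)
    hence "(u, w) \<in> ?R\<^sup>*" "(w, v) \<in> ?R\<^sup>*" by (auto intro: symD[OF sym_rtrancl[OF sym_edge_rel]])
    thus ?thesis by (rule rtrancl_trans)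
  qed
  thus False using assms unfolding connected_graph_def by blast
qed

lemma simple_graph_induced_edges:
  "simple_graph V E \<Longrightarrow> C \<subseteq> V \<Longrightarrow> simple_graph C (induced_edges E C)"
  by (auto simp: simple_graph_def induced_edges_def intro: finite_subset)

lemma no_isolated_component:
  assumes "simple_graph V E" "no_isolated V E" "w \<in> V"
  shows "no_isolated (component E w) (induced_edges E (component E w))"
  unfolding no_isolated_def
proof
  fix v assume v: "v \<in> component E w"
  have "\<forall>e\<in>E. e \<subseteq> V" using assms(1) by (simp add: simple_graph_def)
  hence "v \<in> V" using component_subset[of E V w] assms(3) v by blast
  then obtain e where e: "e \<in> E" "v \<in> e" using assms(2) unfolding no_isolated_def by blast
  moreover have "e \<subseteq> component E w"
    using edge_subset_component[OF e(1) _ e(2) v] e(1) assms(1) by (simp add: simple_graph_def)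
  ultimately show "\<exists>e\<in>induced_edges E (component E w). v \<in> e"
    by (auto simp: induced_edges_def)
qed

lemma card_induced_edges_component_less:
  assumes "simple_graph V E" "no_isolated V E" "\<not> connected_graph V E"
  shows "card (induced_edges E (component E w)) < card E"
proof -
  obtain z where "z \<in> V" "z \<notin> component E w"
    using not_connected_not_subset_component[OF assms(3)] by blast
  then obtain e where "e \<in> E" "z \<in> e" "\<not> e \<subseteq> component E w"
    using assms(2) unfolding no_isolated_def by blast
  hence "induced_edges E (component E w) \<subset> E" by (auto simp: induced_edges_def)
  moreover have "finite E"
  proof (rule finite_subset)
    show "E \<subseteq> Pow V" "finite (Pow V)" using assms(1) by (auto simp: simple_graph_def)
  qed
  ultimately show ?thesis by (rule psubset_card_mono[rotated])
qed

lemma rayleigh_abs_eigenvector_on_component: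
  assumes fin: "finite V" and edges: "\<forall>e\<in>E. e \<subseteq> V" and "w \<in> V"
    and eig: "eigenpair V (adj E) lam x"
  shows "lam * sq_norm (component E w) (\<lambda>v. \<bar>x v\<bar>)
           \<le> quad_form (component E w) (adj (induced_edges E (component E w))) (\<lambda>v. \<bar>x v\<bar>)"
proof -
  let ?C = "component E w"
  have "\<forall>u\<in>V - ?C. \<forall>v\<in>?C. adj E u v = 0" by (intro ballI adj_leaving_component) auto
  hence "quad_form ?C (adj E) x = lam * sq_norm ?C x"
    by (rule eigenpair_quad_form_on_closed[OF eig fin component_subset[OF edges \<open>w \<in> V\<close>]])
  hence "lam * sq_norm ?C (\<lambda>v. \<bar>x v\<bar>) = quad_form ?C (adj E) x" by simp
  also have "\<dots> \<le> quad_form ?C (adj E) (\<lambda>v. \<bar>x v\<bar>)"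
    by (rule quad_form_nonneg_weights_abs) (rule adj_nonneg)
  also have "\<dots> = quad_form ?C (adj (induced_edges E ?C)) (\<lambda>v. \<bar>x v\<bar>)"
    unfolding quad_form_def by (intro sum.cong refl) (simp add: adj_induced_edges)
  finally show ?thesis .
qed

section \<open>Attaching pendant edges\<close>

lemma contains_H43_mono:
  assumes "contains_H43 V E" "V \<subseteq> V'" "E \<subseteq> E'"
  shows "contains_H43 V' E'"
proof -
  obtain a b c d x y where "a \<in> V" "b \<in> V" "c \<in> V" "d \<in> V" "x \<in> V" "y \<in> V"
    "distinct [a, b, c, d, x, y]"
    "{a, b} \<in> E" "{b, c} \<in> E" "{c, d} \<in> E" "{d, a} \<in> E" "{a, x} \<in> E" "{x, y} \<in> E" "{y, a} \<in> E"
    using assms(1) unfolding contains_H43_def by blast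
  thus ?thesis unfolding contains_H43_def using assms(2,3) by blast
qed

lemma H43_free_subgraph: "H43_free V' E' \<Longrightarrow> V \<subseteq> V' \<Longrightarrow> E \<subseteq> E' \<Longrightarrow> H43_free V E"
  unfolding H43_free_def using contains_H43_mono by blast

definition add_pendants :: "'a \<Rightarrow> 'a set \<Rightarrow> 'a set set \<Rightarrow> 'a set set" where
  "add_pendants w P E = E \<union> (\<lambda>p. {w, p}) ` P"

lemma add_pendants_neighbour:
  assumes "\<forall>e\<in>E. e \<subseteq> V" "w \<in> V" "P \<inter> V = {}" "p \<in> P" "{p, t} \<in> add_pendants w P E"
  shows "t = w"
proof -
  have "p \<notin> V" "p \<noteq> w" using assms(2-4) by auto
  hence "{p, t} \<notin> E" using assms(1) by auto
  then obtain q where "{p, t} = {w, q}" using assms(5) by (auto simp: add_pendants_def)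
  thus ?thesis using \<open>p \<noteq> w\<close> by (auto simp: doubleton_eq_iff)
qed

lemma add_pendants_old_edge:
  assumes "{s, t} \<in> add_pendants w P E" "s \<notin> P" "t \<notin> P"
  shows "{s, t} \<in> E"
  using assms by (auto simp: add_pendants_def doubleton_eq_iff)

lemma H43_free_add_pendants:
  assumes free: "H43_free V E" and edges: "\<forall>e\<in>E. e \<subseteq> V" and "w \<in> V" and disj: "P \<inter> V = {}"
  shows "H43_free (V \<union> P) (add_pendants w P E)"
  unfolding H43_free_def
proof
  let ?E = "add_pendants w P E"
  have old: "v \<notin> P" if "{v, s} \<in> ?E" "{t, v} \<in> ?E" "s \<noteq> t" for v s t
  proof
    assume "v \<in> P"
    have "{v, t} \<in> ?E" using that(2) by (simp add: insert_commute)
    hence "t = w" by (rule add_pendants_neighbour[OF edges \<open>w \<in> V\<close> disj \<open>v \<in> P\<close>])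
    moreover have "s = w" by (rule add_pendants_neighbour[OF edges \<open>w \<in> V\<close> disj \<open>v \<in> P\<close> that(1)])
    ultimately show False using that(3) by simp
  qed
  assume "contains_H43 (V \<union> P) ?E"
  then obtain a b c d x y where
    vs: "a \<in> V \<union> P" "b \<in> V \<union> P" "c \<in> V \<union> P" "d \<in> V \<union> P" "x \<in> V \<union> P" "y \<in> V \<union> P"
    and dis: "distinct [a, b, c, d, x, y]"
    and es: "{a, b} \<in> ?E" "{b, c} \<in> ?E" "{c, d} \<in> ?E" "{d, a} \<in> ?E"
      "{a, x} \<in> ?E" "{x, y} \<in> ?E" "{y, a} \<in> ?E"
    unfolding contains_H43_def by (elim exE conjE) (rule that; assumption)
  have "a \<notin> P" using old[OF es(1) es(4)] dis by auto
  moreover have "b \<notin> P" using old[OF es(2) es(1)] dis by auto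
  moreover have "c \<notin> P" using old[OF es(3) es(2)] dis by auto
  moreover have "d \<notin> P" using old[OF es(4) es(3)] dis by auto
  moreover have "x \<notin> P" using old[OF es(6) es(5)] dis by auto
  moreover have "y \<notin> P" using old[OF es(7) es(6)] dis by auto
  ultimately have "a \<in> V \<and> b \<in> V \<and> c \<in> V \<and> d \<in> V \<and> x \<in> V \<and> y \<in> V \<and> distinct [a, b, c, d, x, y] \<and>
      {a, b} \<in> E \<and> {b, c} \<in> E \<and> {c, d} \<in> E \<and> {d, a} \<in> E \<and>
      {a, x} \<in> E \<and> {x, y} \<in> E \<and> {y, a} \<in> E"
    using vs dis add_pendants_old_edge[OF es(1)] add_pendants_old_edge[OF es(2)]
      add_pendants_old_edge[OF es(3)] add_pendants_old_edge[OF es(4)] add_pendants_old_edge[OF es(5)]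
      add_pendants_old_edge[OF es(6)] add_pendants_old_edge[OF es(7)]
    by simp
  hence "contains_H43 V E" unfolding contains_H43_def by blast
  thus False using free by (simp add: H43_free_def)
qed

lemma H43_free_class_add_pendants:
  assumes "simple_graph V E" "no_isolated V E" "H43_free V E" "w \<in> V"
    and "finite P" "P \<inter> V = {}" "card E + card P = m"
  shows "H43_free_class m (V \<union> P) (add_pendants w P E)"
  unfolding H43_free_class_def
proof (intro conjI)
  have edges: "\<forall>e\<in>E. e \<subseteq> V" and fin: "finite V" "finite E"
    using assms(1) unfolding simple_graph_def by (auto intro: finite_subset[of E "Pow V"])
  have "w \<notin> P" using assms(4,6) by blast
  have "card {w, p} = 2" if "p \<in> P" for p
  proof -
    have "w \<noteq> p" using that \<open>w \<notin> P\<close> by blast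
    thus ?thesis by simp
  qed
  thus "simple_graph (V \<union> P) (add_pendants w P E)"
    using assms(1,4,5) by (auto simp: simple_graph_def add_pendants_def)
  have "inj_on (\<lambda>p. {w, p}) P" using \<open>w \<notin> P\<close> by (auto simp: inj_on_def doubleton_eq_iff)
  have "E \<inter> (\<lambda>p. {w, p}) ` P = {}" using edges assms(6) by fastforce
  hence "card (add_pendants w P E) = card E + card ((\<lambda>p. {w, p}) ` P)"
    unfolding add_pendants_def using fin assms(5) by (intro card_Un_disjoint) auto
  also have "card ((\<lambda>p. {w, p}) ` P) = card P" by (rule card_image) fact
  finally show "card (add_pendants w P E) = m" using assms(7) by simp
  show "no_isolated (V \<union> P) (add_pendants w P E)"
    unfolding no_isolated_def
  proof
    fix v assume "v \<in> V \<union> P"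
    show "\<exists>e\<in>add_pendants w P E. v \<in> e"
    proof (cases "v \<in> V")
      case True
      then obtain e where "e \<in> E" "v \<in> e" using assms(2) unfolding no_isolated_def by blast
      thus ?thesis by (auto simp: add_pendants_def)
    next
      case False
      hence "{w, v} \<in> add_pendants w P E" using \<open>v \<in> V \<union> P\<close> by (simp add: add_pendants_def)
      thus ?thesis by blast
    qed
  qed
  show "H43_free (V \<union> P) (add_pendants w P E)"
    using H43_free_add_pendants[OF assms(3) edges assms(4,6)] .
qed

lemma adj_add_pendants:
  assumes "\<forall>e\<in>E. e \<subseteq> V" "w \<in> V" "P \<inter> V = {}"
  shows "adj (add_pendants w P E)
           = (\<lambda>u v. adj E u v + ((if u = w \<and> v \<in> P then 1 else 0) + (if v = w \<and> u \<in> P then 1 else 0)))"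
  using assms by (fastforce simp: adj_def add_pendants_def doubleton_eq_iff)

lemma quad_form_add_pendants:
  assumes "finite V" "finite P" and edges: "\<forall>e\<in>E. e \<subseteq> V" and "w \<in> V" "P \<inter> V = {}"
    and "\<forall>p\<in>P. y p = c"
  shows "quad_form (V \<union> P) (adj (add_pendants w P E)) y
           = quad_form V (adj E) y + 2 * real (card P) * y w * c"
proof -
  let ?s = "\<lambda>u v. if u = w \<and> v \<in> P then 1 else 0 :: real"
  have "quad_form (V \<union> P) (adj E) y = quad_form V (adj E) y"
    using assms(1,2) edges by (intro quad_form_supported) (auto simp: adj_def split: if_splits)
  moreover have "quad_form (V \<union> P) ?s y = real (card P) * y w * c"
    using assms by (intro quad_form_star) auto
  moreover have "quad_form (V \<union> P) (\<lambda>u v. ?s v u) y = quad_form (V \<union> P) ?s y"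
    by (rule quad_form_transpose)
  ultimately show ?thesis
    unfolding adj_add_pendants[OF edges assms(4,5)] quad_form_add by simp
qed

text \<open>The test vector is y on V and \<open>\<epsilon> = y w / (\<bar>\<lambda>\<bar> + 1)\<close> on the pendant vertices; this
choice makes the gain \<open>2 k (y w) \<epsilon>\<close> in the quadratic form beat the cost \<open>\<lambda> k \<epsilon>\<^sup>2\<close> in the norm.\<close>

lemma spectral_radius_add_pendants_gt:
  assumes fin: "finite V" "finite P" and edges: "\<forall>e\<in>E. e \<subseteq> V" and "w \<in> V"
    and "P \<noteq> {}" "P \<inter> V = {}"
    and yw: "y w > 0" and ray: "lam * sq_norm V y \<le> quad_form V (adj E) y"
  shows "lam < spectral_radius (V \<union> P) (add_pendants w P E)"
proof -
  define k where "k = real (card P)"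
  define eps where "eps = y w / (\<bar>lam\<bar> + 1)"
  define z where "z = (\<lambda>v. if v \<in> P then eps else y v)"
  have kpos: "k > 0" using assms(2,5) by (simp add: k_def card_gt_0_iff)
  have epspos: "eps > 0" using yw by (simp add: eps_def)
  have "lam * eps \<le> \<bar>lam\<bar> * eps" using epspos by (simp add: mult_right_mono)
  also have "\<dots> < y w" using yw by (simp add: eps_def field_simps)
  finally have "lam * eps < 2 * y w" using yw by linarith
  hence "(k * eps) * (lam * eps) < (k * eps) * (2 * y w)"
    using kpos epspos by (intro mult_strict_left_mono) auto
  hence gain: "lam * (k * eps\<^sup>2) < 2 * k * y w * eps" by (simp add: power2_eq_square mult_ac)
  have zV: "z v = y v" if "v \<in> V" for v using that assms(6) by (auto simp: z_def)
  have "sq_norm (V \<union> P) z = sq_norm V z + sq_norm P z"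
    unfolding sq_norm_def using fin assms(6) by (simp add: sum.union_disjoint Int_commute)
  hence norm: "sq_norm (V \<union> P) z = sq_norm V y + k * eps\<^sup>2"
    using zV by (simp add: sq_norm_def z_def k_def)
  have "quad_form (V \<union> P) (adj (add_pendants w P E)) z
          = quad_form V (adj E) z + 2 * k * z w * eps"
    unfolding k_def by (rule quad_form_add_pendants[OF fin edges \<open>w \<in> V\<close> assms(6)])
      (simp add: z_def)
  also have "\<dots> = quad_form V (adj E) y + 2 * k * y w * eps"
    using zV \<open>w \<in> V\<close> unfolding quad_form_def by simp
  finally have "lam * sq_norm (V \<union> P) z < quad_form (V \<union> P) (adj (add_pendants w P E)) z"
    using ray gain norm by (simp add: distrib_left)
  also have "\<dots> \<le> spectral_radius (V \<union> P) (add_pendants w P E) * sq_norm (V \<union> P) z"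
  proof -
    have "finite (V \<union> P)" "V \<union> P \<noteq> {}" using fin \<open>w \<in> V\<close> by auto
    thus ?thesis using spectral_radius_rayleigh by blast
  qed
  finally show ?thesis
    using sq_norm_nonneg mult_right_less_imp_less by blast
qed

lemma H43_free_class_component_add_pendants:
  assumes member: "H43_free_class m V E" and disconnected: "\<not> connected_graph V E" and "w \<in> V"
  obtains P where "finite P" "P \<noteq> {}" "P \<inter> component E w = {}"
    "H43_free_class m (component E w \<union> P) (add_pendants w P (induced_edges E (component E w)))"
proof -
  have G: "simple_graph V E" "card E = m" "no_isolated V E" "H43_free V E"
    using member unfolding H43_free_class_def by auto
  hence fin: "finite V" and edges: "\<forall>e\<in>E. e \<subseteq> V" by (auto simp: simple_graph_def)
  define C where "C = component E w"
  define EC where "EC = induced_edges E C"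
  have "C \<subseteq> V" "w \<in> C" unfolding C_def
    by (rule component_subset[OF edges \<open>w \<in> V\<close>], rule self_in_component)
  have "card EC < m"
    unfolding EC_def C_def G(2)[symmetric]
    by (rule card_induced_edges_component_less[OF G(1,3) disconnected])
  obtain P where P: "finite P" "card P = m - card EC" "P \<subseteq> UNIV - V"
    using infinite_arbitrarily_large[OF Diff_infinite_finite[OF fin infinite_UNIV_nat]] by blast
  have "P \<inter> C = {}" "P \<noteq> {}" "card EC + card P = m" using P \<open>C \<subseteq> V\<close> \<open>card EC < m\<close> by auto
  have "H43_free_class m (C \<union> P) (add_pendants w P EC)"
  proof (rule H43_free_class_add_pendants)
    show "simple_graph C EC"
      unfolding EC_def by (rule simple_graph_induced_edges[OF G(1) \<open>C \<subseteq> V\<close>])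
    show "no_isolated C EC"
      unfolding C_def EC_def by (rule no_isolated_component[OF G(1,3) \<open>w \<in> V\<close>])
    show "H43_free C EC"
      by (rule H43_free_subgraph[OF G(4) \<open>C \<subseteq> V\<close>]) (auto simp: EC_def induced_edges_def)
  qed fact+
  thus ?thesis using that P(1) \<open>P \<noteq> {}\<close> \<open>P \<inter> C = {}\<close> unfolding C_def EC_def by blast
qed

theorem mainTheorem3:
  fixes m :: nat and V :: "nat set" and E :: "nat set set"
  assumes "m \<ge> 38"
    and "H43_free_class m V E"
    and "\<forall>V' E'. H43_free_class m V' E' \<longrightarrow> spectral_radius V' E' \<le> spectral_radius V E"
  shows "connected_graph V E"
proof (rule ccontr)
  assume disconnected: "\<not> connected_graph V E"
  have fin: "finite V" and edges: "\<forall>e\<in>E. e \<subseteq> V"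
    using assms(2) by (auto simp: H43_free_class_def simple_graph_def)
  have "V \<noteq> {}" using disconnected by (auto simp: connected_graph_def)
  then obtain x where eig: "eigenpair V (adj E) (spectral_radius V E) x"
    using spectral_radius_rayleigh[OF fin] by blast
  then obtain w where "w \<in> V" "x w \<noteq> 0" unfolding eigenpair_def by blast
  let ?C = "component E w" and ?EC = "induced_edges E (component E w)"
  obtain P where P: "finite P" "P \<noteq> {}" "P \<inter> ?C = {}"
    and extension: "H43_free_class m (?C \<union> P) (add_pendants w P ?EC)"
    using H43_free_class_component_add_pendants[OF assms(2) disconnected \<open>w \<in> V\<close>] by blast
  have "spectral_radius V E < spectral_radius (?C \<union> P) (add_pendants w P ?EC)"
  proof (rule spectral_radius_add_pendants_gt)
    show "finite ?C" using finite_subset[OF component_subset[OF edges \<open>w \<in> V\<close>] fin] .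
    show "\<forall>e\<in>?EC. e \<subseteq> ?C" by (simp add: induced_edges_def)
    show "w \<in> ?C" by (rule self_in_component)
    show "0 < \<bar>x w\<bar>" using \<open>x w \<noteq> 0\<close> by simp
    show "spectral_radius V E * sq_norm ?C (\<lambda>v. \<bar>x v\<bar>) \<le> quad_form ?C (adj ?EC) (\<lambda>v. \<bar>x v\<bar>)"
      by (rule rayleigh_abs_eigenvector_on_component[OF fin edges \<open>w \<in> V\<close> eig])
  qed (use P in auto)
  moreover have "spectral_radius (?C \<union> P) (add_pendants w P ?EC) \<le> spectral_radius V E"
    using assms(3) extension by blast
  ultimately show False by simp
qed

end
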